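(* Let $C=(C_1,\dots,C_n)\in\mathbb{F}_p^n$ and $(d_1,\dots,d_n)\in\mathbb{F}_p^n$ be a solution of the system $$\sum_{j=1}^n M_jC_j=0,\qquad \Omega^M_j C=d_j C\ \ (j=1,\dots,n-1),\qquad d_n=0.$$ Let the index $i$ be such that $C_i\neq 0$ and $C_j=0$ for $j=1,\dots,i-1$. Then $$d_j=M_j\ (j=1,\dots,i-1),\qquad d_i=\sum_{j=i}^n M_j,\quad d_i\neq M_i,\qquad d_j=0\ (j=i+1,\dots,n),$$ $$\sum_{l=i+1}^n M_l\neq 0,\qquad C_j=-\frac{M_i}{\sum_{l=i+1}^n M_l}\,C_i\quad (j=i+1,\dots,n).$$ Conversely, if a pair $C=(C_1,\dots,C_n)$, $(d_1,\dots,d_n)\in\mathbb{F}_p^n$ satisfies, for some index $i$, the conditions $C_i\neq0$, $C_j=0$ for $j<i$, together with $d_j=M_j$ for $j<i$, $d_i=\sum_{j=i}^nM_j$, $d_i\neq M_i$, $d_j=0$ for $j>i$, $\sum_{l=i+1}^nM_l\neq0$, and $C_j=-\frac{M_i}{\sum_{l=i+1}^nM_l}C_i$ for $j>i$, then it is a solution of the system above.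
   Context: $p$ and $q$ are primes, $n$ is a positive integer with $p>n\geq 2$ and $p>q$; $(m_1,\dots,m_n)\in\mathbb{Z}_{>0}^n$ with $m_i<q$. For $i=1,\dots,n$, $M_i$ is the least positive integer with $M_i\equiv -m_i/q \pmod p$. For $j\neq l$, $\Omega^M_{jl}$ is the $n\times n$ matrix over $\mathbb{F}_p$ whose only nonzero entries are: $(j,j)$-entry $M_l$, $(j,l)$-entry $-M_l$, $(l,j)$-entry $-M_j$, $(l,l)$-entry $M_j$. For $j=1,\dots,n-1$, $\Omega^M_j=\sum_{l=j+1}^n\Omega^M_{jl}$, acting on column vectors $C\in\mathbb{F}_p^n$. (This system describes the possible leading coefficient $C$ and exponents $(d_1,\dots,d_n)$ mod $p$ of the leading term, in lexicographic order $z_1>z_2>\dots>z_n$, of a polynomial solution over $\mathbb{F}_p$ of the KZ system $\partial I/\partial z_i=\frac1q\sum_{j\ne i}\frac{\Omega_{ij}}{z_i-z_j}I$, $\sum m_iI_i=0$.) *)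

theory Defs
  imports "Berlekamp_Zassenhaus.Finite_Field"
begin

text \<open>F_p is modelled as the type 'p mod_ring with CARD('p) = p prime.
  Vectors in F_p^n are functions nat => 'p mod_ring, only indices 1..n matter.\<close>

text \<open>M_i: least positive integer with M_i = -m_i/q (mod p), i.e. M_i * q = -m_i (mod p).\<close>
definition Mnat :: "nat \<Rightarrow> nat \<Rightarrow> (nat \<Rightarrow> nat) \<Rightarrow> nat \<Rightarrow> nat" where
  "Mnat p q m i = (LEAST M::nat. M > 0 \<and> [int M * int q = - int (m i)] (mod int p))"

definition Omega_pair :: "(nat \<Rightarrow> 'a::comm_ring_1) \<Rightarrow> nat \<Rightarrow> nat \<Rightarrow> nat \<Rightarrow> nat \<Rightarrow> 'a" where
  "Omega_pair M j l a b =
     (if a = j \<and> b = j then M l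
      else if a = j \<and> b = l then - M l
      else if a = l \<and> b = j then - M j
      else if a = l \<and> b = l then M j
      else 0)"

definition Omega :: "(nat \<Rightarrow> 'a::comm_ring_1) \<Rightarrow> nat \<Rightarrow> nat \<Rightarrow> nat \<Rightarrow> nat \<Rightarrow> 'a" where
  "Omega M n j a b = (\<Sum>l = j+1..n. Omega_pair M j l a b)"

definition mat_act :: "nat \<Rightarrow> (nat \<Rightarrow> nat \<Rightarrow> 'a::comm_ring_1) \<Rightarrow> (nat \<Rightarrow> 'a) \<Rightarrow> nat \<Rightarrow> 'a" where
  "mat_act n A C a = (\<Sum>b = 1..n. A a b * C b)"

definition is_solution :: "nat \<Rightarrow> (nat \<Rightarrow> 'a::comm_ring_1) \<Rightarrow> (nat \<Rightarrow> 'a) \<Rightarrow> (nat \<Rightarrow> 'a) \<Rightarrow> bool" where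
  "is_solution n M C d \<longleftrightarrow>
     (\<Sum>j = 1..n. M j * C j) = 0 \<and>
     (\<forall>j \<in> {1..n-1}. \<forall>a \<in> {1..n}. mat_act n (Omega M n j) C a = d j * C a) \<and>
     d n = 0"

end

theory Submission
  imports Defs
begin

text \<open>Row a of \<open>\<Omega>\<^sup>M\<^sub>j C\<close> is \<open>M\<^sub>j (C\<^sub>a - C\<^sub>j)\<close> for \<open>a > j\<close>, vanishes for \<open>a < j\<close>, and
  row j is \<open>C\<^sub>j \<Sigma>\<^sub>l\<^sub>>\<^sub>j M\<^sub>l - \<Sigma>\<^sub>l\<^sub>>\<^sub>j M\<^sub>l C\<^sub>l\<close>.  Hence, if i is the first index with
  \<open>C\<^sub>i \<noteq> 0\<close>, the eigenvalue equations read off at row i give \<open>d\<^sub>j = M\<^sub>j\<close> for \<open>j < i\<close> and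
  \<open>d\<^sub>j = 0\<close> for \<open>j > i\<close>; row i of \<open>\<Omega>\<^sub>i\<close> together with \<open>\<Sigma> M\<^sub>j C\<^sub>j = 0\<close> gives
  \<open>d\<^sub>i = \<Sigma>\<^sub>j\<^sub>\<ge>\<^sub>i M\<^sub>j\<close>, and the rows \<open>a > i\<close> of \<open>\<Omega>\<^sub>i\<close> give
  \<open>(\<Sigma>\<^sub>l\<^sub>>\<^sub>i M\<^sub>l) C\<^sub>a = -M\<^sub>i C\<^sub>i\<close>.  Since \<open>M\<^sub>i \<noteq> 0\<close> in \<open>\<bbbF>\<^sub>p\<close> (as \<open>0 < m\<^sub>i < p\<close>), the
  right-hand side is nonzero, which forces \<open>\<Sigma>\<^sub>l\<^sub>>\<^sub>i M\<^sub>l \<noteq> 0\<close> and determines the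
  remaining \<open>C\<^sub>a\<close>.  Conversely, such a C is constant beyond i, so \<open>\<Omega>\<^sub>j C = 0\<close> for
  \<open>j > i\<close>, while for \<open>j < i\<close> it vanishes up to j and satisfies \<open>\<Sigma> M\<^sub>l C\<^sub>l = 0\<close>, which
  makes it an eigenvector of \<open>\<Omega>\<^sub>j\<close> with eigenvalue \<open>M\<^sub>j\<close>.\<close>

lemma Omega_pair_row:
  fixes M C :: "nat \<Rightarrow> 'a::comm_ring_1"
  assumes "j \<noteq> l" "j \<in> {1..n}" "l \<in> {1..n}"
  shows "(\<Sum>b = 1..n. Omega_pair M j l a b * C b) =
    (if a = j then M l * (C j - C l) else if a = l then M j * (C l - C j) else 0)"
proof -
  have "Omega_pair M j l a b * C b =
     (if a = j then (if b = j then M l * C j else 0) + (if b = l then - M l * C l else 0)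
      else if a = l then (if b = j then - M j * C j else 0) + (if b = l then M j * C l else 0)
      else 0)" for b
    using assms(1) by (auto simp: Omega_pair_def)
  then show ?thesis
    using assms by (auto simp: sum.distrib sum.delta algebra_simps)
qed

lemma mat_act_Omega:
  fixes M C :: "nat \<Rightarrow> 'a::comm_ring_1"
  assumes "1 \<le> j" "j < n" "a \<in> {1..n}"
  shows "mat_act n (Omega M n j) C a =
    (if a = j then C j * (\<Sum>l = j+1..n. M l) - (\<Sum>l = j+1..n. M l * C l)
     else if j < a then M j * (C a - C j) else 0)"
proof -
  have "mat_act n (Omega M n j) C a = (\<Sum>l = j+1..n. \<Sum>b = 1..n. Omega_pair M j l a b * C b)"
    unfolding mat_act_def Omega_def by (simp add: sum_distrib_right) (rule sum.swap)
  also have "\<dots> = (\<Sum>l = j+1..n.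
      if a = j then M l * (C j - C l) else if a = l then M j * (C l - C j) else 0)"
    using assms by (intro sum.cong refl Omega_pair_row) auto
  also have "\<dots> = (if a = j then C j * (\<Sum>l = j+1..n. M l) - (\<Sum>l = j+1..n. M l * C l)
     else if j < a then M j * (C a - C j) else 0)"
    using assms by (auto simp: sum.delta sum_distrib_left sum_subtractf algebra_simps)
  finally show ?thesis .
qed

lemma sum_split_vanishing_prefix:
  fixes f :: "nat \<Rightarrow> 'a::comm_monoid_add"
  assumes "a \<le> i" "i \<le> n" "\<forall>j \<in> {a..<i}. f j = 0"
  shows "(\<Sum>j = a..n. f j) = f i + (\<Sum>j = i+1..n. f j)"
proof -
  have "(\<Sum>j = a..n. f j) = (\<Sum>j = i..n. f j)"
    using assms by (intro sum.mono_neutral_right) auto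
  also have "\<dots> = f i + (\<Sum>j = i+1..n. f j)"
    using assms(2) by (simp add: sum.atLeast_Suc_atMost)
  finally show ?thesis .
qed

lemma solution_tail_sum:
  fixes M C d :: "nat \<Rightarrow> 'a::comm_ring_1"
  assumes "is_solution n M C d" "i \<in> {1..n}" "\<forall>j \<in> {1..<i}. C j = 0"
  shows "(\<Sum>l = i+1..n. M l * C l) = - (M i * C i)"
proof -
  have "M i * C i + (\<Sum>l = i+1..n. M l * C l) = 0"
    using assms sum_split_vanishing_prefix[of 1 i n "\<lambda>j. M j * C j"]
    unfolding is_solution_def by simp
  then show ?thesis
    by (simp add: eq_neg_iff_add_eq_0 add.commute)
qed

lemma solution_leading_form:
  fixes M C d :: "nat \<Rightarrow> 'a::field" and i n :: nat
  defines "S \<equiv> \<Sum>l = i+1..n. M l"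
  assumes sol: "is_solution n M C d"
    and hMi: "M i \<noteq> 0" and hi: "i \<in> {1..n}" and hCi: "C i \<noteq> 0"
    and hCj: "\<forall>j \<in> {1..<i}. C j = 0"
  shows "(\<forall>j \<in> {1..<i}. d j = M j) \<and> d i = M i + S \<and> (\<forall>j \<in> {i+1..n}. d j = 0) \<and>
    S \<noteq> 0 \<and> (\<forall>j \<in> {i+1..n}. C j = - (M i / S) * C i)"
proof -
  define T where "T = (\<Sum>l = i+1..n. M l * C l)"
  have rows: "mat_act n (Omega M n j) C a = d j * C a"
    if "1 \<le> j" "j < n" "a \<in> {1..n}" for j a
    using sol that unfolding is_solution_def by auto
  have dn: "d n = 0"
    using sol unfolding is_solution_def by simp
  have T: "T = - (M i * C i)"
    unfolding T_def using sol hi hCj by (rule solution_tail_sum)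
  have "i < n"
  proof (rule ccontr)
    assume "\<not> i < n"
    then have "T = 0" using hi by (simp add: T_def)
    with T hMi hCi show False by simp
  qed
  have "d j = M j" if "j \<in> {1..<i}" for j
  proof -
    have "M j * C i = d j * C i"
      using rows[of j i] mat_act_Omega[of j n i M C] that hi \<open>i < n\<close> hCj by auto
    then show ?thesis using hCi by simp
  qed
  moreover have "d j = 0" if "j \<in> {i+1..n}" for j
  proof (cases "j = n")
    case False
    then have "0 = d j * C i"
      using rows[of j i] mat_act_Omega[of j n i M C] that hi by auto
    then show ?thesis using hCi by simp
  qed (use dn in simp)
  moreover have di: "d i = M i + S"
  proof -
    have "C i * S - T = d i * C i"
      using rows[of i i] mat_act_Omega[of i n i M C] hi \<open>i < n\<close> by (simp add: S_def T_def)
    then have "(M i + S) * C i = d i * C i" using T by (simp add: algebra_simps)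
    then show ?thesis using hCi by simp
  qed
  moreover have SC: "S * C a = - (M i * C i)" if "a \<in> {i+1..n}" for a
  proof -
    have "M i * (C a - C i) = (M i + S) * C a"
      using rows[of i a] mat_act_Omega[of i n a M C] that hi di \<open>i < n\<close> by auto
    then show ?thesis by (simp add: algebra_simps eq_neg_iff_add_eq_0)
  qed
  moreover have "S \<noteq> 0"
    using SC[of "i+1"] \<open>i < n\<close> hMi hCi by auto
  moreover have "C a = - (M i / S) * C i" if "a \<in> {i+1..n}" for a
    using SC[OF that] \<open>S \<noteq> 0\<close> by (simp add: field_simps)
  ultimately show ?thesis
    by blast
qed

lemma mat_act_Omega_vanishing_prefix:
  fixes M C :: "nat \<Rightarrow> 'a::comm_ring_1"
  assumes j: "1 \<le> j" "j < n" and a: "a \<in> {1..n}"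
    and prefix: "\<forall>l \<in> {1..j}. C l = 0" and total: "(\<Sum>l = 1..n. M l * C l) = 0"
  shows "mat_act n (Omega M n j) C a = M j * C a"
proof -
  have "(\<Sum>l = j+1..n. M l * C l) = (\<Sum>l = 1..n. M l * C l)"
    using prefix j by (intro sum.mono_neutral_left) auto
  then show ?thesis
    unfolding mat_act_Omega[OF j a] using total prefix j a by auto
qed

lemma mat_act_Omega_constant_tail:
  fixes M C :: "nat \<Rightarrow> 'a::comm_ring_1"
  assumes j: "1 \<le> j" "j < n" and a: "a \<in> {1..n}" and tail: "\<forall>l \<in> {j+1..n}. C l = C j"
  shows "mat_act n (Omega M n j) C a = 0"
proof -
  have "(\<Sum>l = j+1..n. M l * C l) = C j * (\<Sum>l = j+1..n. M l)"
    using tail by (simp add: sum_distrib_left mult.commute)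
  then show ?thesis
    unfolding mat_act_Omega[OF j a] using tail a by auto
qed

lemma sum_weighted_leading_tail:
  fixes M C :: "nat \<Rightarrow> 'a::field" and i n :: nat
  defines "S \<equiv> \<Sum>l = i+1..n. M l"
  assumes hS: "S \<noteq> 0" and tail: "\<forall>l \<in> {i+1..n}. C l = - (M i / S) * C i"
  shows "(\<Sum>l = i+1..n. M l * C l) = - (M i * C i)"
proof -
  have "(\<Sum>l = i+1..n. M l * C l) = (\<Sum>l = i+1..n. M l * (- (M i / S) * C i))"
    using tail by (intro sum.cong) auto
  also have "\<dots> = S * (- (M i / S) * C i)"
    by (simp only: S_def sum_distrib_right)
  also have "\<dots> = - (M i * C i)"
    using hS by (simp add: field_simps)
  finally show ?thesis .
qed

lemma mat_act_Omega_leading: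
  fixes M C :: "nat \<Rightarrow> 'a::field" and i n :: nat
  defines "S \<equiv> \<Sum>l = i+1..n. M l"
  assumes i: "1 \<le> i" "i < n" and a: "a \<in> {1..n}"
    and prefix: "\<forall>l \<in> {1..<i}. C l = 0"
    and hS: "S \<noteq> 0" and tail: "\<forall>l \<in> {i+1..n}. C l = - (M i / S) * C i"
  shows "mat_act n (Omega M n i) C a = (M i + S) * C a"
proof -
  have T: "(\<Sum>l = i+1..n. M l * C l) = - (M i * C i)"
    using sum_weighted_leading_tail hS tail unfolding S_def by blast
  consider "a < i" | "a = i" | "i < a" by linarith
  then show ?thesis
  proof cases
    case 1
    then show ?thesis
      unfolding mat_act_Omega[OF i a] using prefix a by auto
  next
    case 2
    then show ?thesis
      unfolding mat_act_Omega[OF i a] using T by (simp add: S_def algebra_simps)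
  next
    case 3
    then have "S * C a = - (M i * C i)"
      using tail a hS by auto
    then show ?thesis
      unfolding mat_act_Omega[OF i a] using 3 by (simp add: algebra_simps)
  qed
qed

lemma leading_form_solution:
  fixes M C d :: "nat \<Rightarrow> 'a::field" and i n :: nat
  defines "S \<equiv> \<Sum>l = i+1..n. M l"
  assumes hi: "i \<in> {1..n}" and hCj: "\<forall>j \<in> {1..<i}. C j = 0"
    and hdj: "\<forall>j \<in> {1..<i}. d j = M j" and di: "d i = M i + S"
    and hdk: "\<forall>j \<in> {i+1..n}. d j = 0" and hS: "S \<noteq> 0"
    and hCk: "\<forall>j \<in> {i+1..n}. C j = - (M i / S) * C i"
  shows "is_solution n M C d"
proof -
  have "i < n"
    using hi hS by (cases "i = n") (auto simp: S_def)
  have total: "(\<Sum>j = 1..n. M j * C j) = 0"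
    using sum_split_vanishing_prefix[of 1 i n "\<lambda>j. M j * C j"] hi hCj
      sum_weighted_leading_tail[OF hS[unfolded S_def] hCk[unfolded S_def]]
    by simp
  have "mat_act n (Omega M n j) C a = d j * C a"
    if j: "1 \<le> j" "j < n" and a: "a \<in> {1..n}" for j a
  proof -
    consider "j < i" | "j = i" | "i < j" by linarith
    then show ?thesis
    proof cases
      case 1
      then show ?thesis
        using mat_act_Omega_vanishing_prefix[OF j a _ total] hCj hdj j by auto
    next
      case 2
      then show ?thesis
        using mat_act_Omega_leading[OF _ _ a hCj] hS hCk di j unfolding S_def by auto
    next
      case 3
      then have "\<forall>l \<in> {j+1..n}. C l = C j"
        using hCk by auto
      then show ?thesis
        using mat_act_Omega_constant_tail[OF j a] hdk 3 j by auto
    qed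
  qed
  then show ?thesis
    unfolding is_solution_def using total hdk \<open>i < n\<close> by auto
qed

lemma is_solution_iff_leading_form:
  fixes M C d :: "nat \<Rightarrow> 'a::field"
  assumes "M i \<noteq> 0" "i \<in> {1..n}" "C i \<noteq> 0" "\<forall>j \<in> {1..<i}. C j = 0"
  shows "is_solution n M C d \<longleftrightarrow>
    ((\<forall>j \<in> {1..<i}. d j = M j) \<and>
     d i = (\<Sum>j = i..n. M j) \<and> d i \<noteq> M i \<and>
     (\<forall>j \<in> {i+1..n}. d j = 0) \<and>
     (\<Sum>l = i+1..n. M l) \<noteq> 0 \<and>
     (\<forall>j \<in> {i+1..n}. C j = - (M i / (\<Sum>l = i+1..n. M l)) * C i))"
    (is "_ \<longleftrightarrow> ?leading_form")
proof -
  have sum_from_i: "(\<Sum>j = i..n. M j) = M i + (\<Sum>l = i+1..n. M l)"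
    using assms(2) by (simp add: sum.atLeast_Suc_atMost)
  show ?thesis
  proof
    assume sol: "is_solution n M C d"
    show ?leading_form
      using solution_leading_form[where M = M and C = C and d = d and i = i and n = n, OF sol assms]
      unfolding sum_from_i by simp
  next
    assume ?leading_form
    then show "is_solution n M C d"
      using assms(2,4) sum_from_i by (intro leading_form_solution) auto
  qed
qed

lemma Mnat_cong:
  assumes "coprime q p" "p > 0"
  shows "[int (Mnat p q m k) * int q = - int (m k)] (mod int p)"
proof -
  have "coprime (int q) (int p)"
    using assms(1) by simp
  then obtain x where x: "[int q * x = - int (m k)] (mod int p)"
    using cong_solve_dvd_int by (metis coprime_imp_gcd_eq_1 one_dvd)
  define M0 where "M0 = nat (x mod int p) + p"
  have "int M0 = x mod int p + int p"
    using assms(2) by (simp add: M0_def)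
  then have "[int M0 = x] (mod int p)"
    by (simp add: cong_def mod_add_right_eq[symmetric])
  then have "[int M0 * int q = - int (m k)] (mod int p)"
    using x by (metis cong_scalar_right cong_trans mult.commute)
  moreover have "M0 > 0"
    using assms(2) by (simp add: M0_def)
  ultimately have "0 < M0 \<and> [int M0 * int q = - int (m k)] (mod int p)"
    by blast
  then have "0 < Mnat p q m k \<and> [int (Mnat p q m k) * int q = - int (m k)] (mod int p)"
    unfolding Mnat_def by (rule LeastI)
  then show ?thesis
    by blast
qed

lemma Mnat_mod_ring_nonzero:
  assumes "p = CARD('p::prime_card)" "coprime q p" "0 < m k" "m k < p"
  shows "(of_nat (Mnat p q m k) :: 'p mod_ring) \<noteq> 0"
proof
  assume "(of_nat (Mnat p q m k) :: 'p mod_ring) = 0"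
  then have "int p dvd int (Mnat p q m k) * int q"
    using assms(1) of_nat_0_mod_ring_dvd by fastforce
  then have "int p dvd int (m k)"
    using Mnat_cong[OF assms(2)] assms(4) by (metis cong_dvd_iff dvd_minus_iff gr_zeroI less_zeroE)
  with assms(3,4) show False
    by (simp add: nat_dvd_not_less)
qed

theorem theorem5p3:
  fixes p q n :: nat and m :: "nat \<Rightarrow> nat"
    and C d :: "nat \<Rightarrow> 'p::prime_card mod_ring" and i :: nat
  defines "M \<equiv> (\<lambda>k. of_nat (Mnat p q m k) :: 'p mod_ring)"
  assumes hp: "p = CARD('p)" and hq: "prime q" and hpq: "p > q"
    and hn: "2 \<le> n" "n < p"
    and hm: "\<forall>k \<in> {1..n}. 0 < m k \<and> m k < q"
    and hi: "i \<in> {1..n}" and hCi: "C i \<noteq> 0" and hCj: "\<forall>j \<in> {1..<i}. C j = 0"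
  shows "is_solution n M C d \<longleftrightarrow>
    ((\<forall>j \<in> {1..<i}. d j = M j) \<and>
     d i = (\<Sum>j = i..n. M j) \<and> d i \<noteq> M i \<and>
     (\<forall>j \<in> {i+1..n}. d j = 0) \<and>
     (\<Sum>l = i+1..n. M l) \<noteq> 0 \<and>
     (\<forall>j \<in> {i+1..n}. C j = - (M i / (\<Sum>l = i+1..n. M l)) * C i))"
proof (rule is_solution_iff_leading_form[OF _ hi hCi hCj])
  have "coprime q p"
    using hp hq hpq prime_card by (metis prime_nat_iff_prime primes_coprime less_not_refl)
  then show "M i \<noteq> 0"
    unfolding M_def using Mnat_mod_ring_nonzero[OF hp] hm hi hpq by fastforce
qed

end
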